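(* Let $(X,d)$ be a metric space, $\mathcal{R}$ an arbitrary binary relation on $X$, and $p$ a $w$-distance on $X$ with respect to $\mathcal{R}$. Let $T:X\to X$ satisfy: (1) there exists $Y\subseteq X$ with $T(X)\subseteq Y$ such that $(Y,d)$ is $\mathcal{R}$-complete; (2) $X(T,\mathcal{R})\neq\emptyset$ and $\mathcal{R}$ is $T$-closed; (3) either $T$ is $\mathcal{R}$-continuous, or $\mathcal{R}|_Y$ is $d$-self-closed; (4) there exists $\lambda\in[0,1)$ such that $p(Tx,Ty)\le\lambda\,p(x,y)$ for all $x,y\in X$ with $(x,y)\in\mathcal{R}$. Then $T$ has a fixed point, i.e. $F(T)=\{x\in X: Tx=x\}\neq\emptyset$.
   Context: A binary relation $\mathcal{R}$ on $X$ is a subset of $X\times X$. A sequence $(x_n)$ is $\mathcal{R}$-preserving if $(x_n,x_{n+1})\in\mathcal{R}$ for all $n\in\mathbb{N}\cup\{0\}$. $(Y,d)$ is $\mathcal{R}$-complete if every $\mathcal{R}$-preserving Cauchy sequence in $Y$ converges in $Y$. $X(T,\mathcal{R})=\{x\in X:(x,Tx)\in\mathcal{R}\}$. $\mathcal{R}$ is $T$-closed if $(x,y)\in\mathcal{R}$ implies $(Tx,Ty)\in\mathcal{R}$. $T$ is $\mathcal{R}$-continuous if for every $x\in X$ and every $\mathcal{R}$-preserving sequence $x_n\to x$ one has $Tx_n\to Tx$. $\mathcal{R}|_Y=\mathcal{R}\cap(Y\times Y)$ is $d$-self-closed if for every $\mathcal{R}|_Y$-preserving sequence $(x_n)$ in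 $Y$ with $x_n\to x$ there is a subsequence $(x_{n_k})$ with $(x_{n_k},x)\in\mathcal{R}|_Y$ for all $k$. A function $g:X\to\mathbb{R}\cup\{\pm\infty\}$ is $\mathcal{R}$-lower semi-continuous at $x$ if for every $\mathcal{R}$-preserving sequence $x_n\to x$, $\liminf_n g(x_n)\ge g(x)$. A function $p:X\times X\to[0,\infty)$ is a $w$-distance with respect to $\mathcal{R}$ if: (w1') $p(x,z)\le p(x,y)+p(y,z)$ for all $x,y,z$; (w2') for each $x$, $p(x,\cdot)$ is $\mathcal{R}$-lower semi-continuous at every point; (w3') for every $\epsilon>0$ there is $\delta>0$ such that $p(z,x)\le\delta$ and $p(z,y)\le\delta$ imply $d(x,y)\le\epsilon$. *)

theory Defs
  imports "HOL-Analysis.Analysis"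
begin

text \<open>Metric space (X,d): X is the whole carrier of a type of class metric_space, d = dist.\<close>

definition R_preserving :: "('a \<times> 'a) set \<Rightarrow> (nat \<Rightarrow> 'a) \<Rightarrow> bool" where
  "R_preserving R x \<longleftrightarrow> (\<forall>n. (x n, x (Suc n)) \<in> R)"

definition R_complete :: "('a::metric_space \<times> 'a) set \<Rightarrow> 'a set \<Rightarrow> bool" where
  "R_complete R Y \<longleftrightarrow> (\<forall>(x::nat \<Rightarrow> 'a). (\<forall>n. x n \<in> Y) \<and> R_preserving R x \<and> Cauchy x
      \<longrightarrow> (\<exists>l\<in>Y. x \<longlonglongrightarrow> l))"

definition X_TR :: "('a \<Rightarrow> 'a) \<Rightarrow> ('a \<times> 'a) set \<Rightarrow> 'a set" where
  "X_TR T R = {x. (x, T x) \<in> R}"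

definition T_closed :: "('a \<times> 'a) set \<Rightarrow> ('a \<Rightarrow> 'a) \<Rightarrow> bool" where
  "T_closed R T \<longleftrightarrow> (\<forall>x y. (x, y) \<in> R \<longrightarrow> (T x, T y) \<in> R)"

definition R_continuous :: "('a::metric_space \<times> 'a) set \<Rightarrow> ('a \<Rightarrow> 'a) \<Rightarrow> bool" where
  "R_continuous R T \<longleftrightarrow> (\<forall>x (s::nat \<Rightarrow> 'a). R_preserving R s \<and> s \<longlonglongrightarrow> x \<longrightarrow> (\<lambda>n. T (s n)) \<longlonglongrightarrow> T x)"

definition restrict_rel :: "('a \<times> 'a) set \<Rightarrow> 'a set \<Rightarrow> ('a \<times> 'a) set" where
  "restrict_rel R Y = R \<inter> (Y \<times> Y)"

definition d_self_closed_on :: "('a::metric_space \<times> 'a) set \<Rightarrow> 'a set \<Rightarrow> bool" where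
  "d_self_closed_on R Y \<longleftrightarrow> (\<forall>(s::nat \<Rightarrow> 'a) x. (\<forall>n. s n \<in> Y) \<and> R_preserving (restrict_rel R Y) s \<and> s \<longlonglongrightarrow> x
      \<longrightarrow> (\<exists>r::nat \<Rightarrow> nat. strict_mono r \<and> (\<forall>k. (s (r k), x) \<in> restrict_rel R Y)))"

definition R_lsc_at :: "('a::metric_space \<times> 'a) set \<Rightarrow> ('a \<Rightarrow> ereal) \<Rightarrow> 'a \<Rightarrow> bool" where
  "R_lsc_at R g x \<longleftrightarrow> (\<forall>(s::nat \<Rightarrow> 'a). R_preserving R s \<and> s \<longlonglongrightarrow> x \<longrightarrow> liminf (\<lambda>n. g (s n)) \<ge> g x)"

definition w_distance_wrt :: "('a::metric_space \<times> 'a) set \<Rightarrow> ('a \<Rightarrow> 'a \<Rightarrow> real) \<Rightarrow> bool" where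
  "w_distance_wrt R p \<longleftrightarrow>
     (\<forall>x y. p x y \<ge> 0) \<and>
     (\<forall>x y z. p x z \<le> p x y + p y z) \<and>
     (\<forall>x y. R_lsc_at R (\<lambda>z. ereal (p x z)) y) \<and>
     (\<forall>\<epsilon>>0. \<exists>\<delta>>0. \<forall>x y z. p z x \<le> \<delta> \<and> p z y \<le> \<delta> \<longrightarrow> dist x y \<le> \<epsilon>)"

end

theory Submission
  imports Defs
begin

text \<open>The Picard orbit of a point \<open>x\<^sub>0\<close> with \<open>(x\<^sub>0, T x\<^sub>0) \<in> R\<close> is \<open>R\<close>-preserving, so the
  contraction applies along it and gives \<open>p(x\<^sub>n, x\<^sub>m) \<le> c \<lambda>\<^sup>n/(1 - \<lambda>)\<close>; axiom (w3') turns
  this into the Cauchy property.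
  In the self-closed case, \<open>R\<close>-lower semicontinuity of \<open>p(x\<^sub>n, \<cdot>)\<close> gives \<open>p(x\<^sub>n, u) \<rightarrow> 0\<close>,
  so the points \<open>T x\<^sub>n\<close> (for \<open>x\<^sub>n\<close> related to \<open>u\<close>) are \<open>p\<close>-close to both \<open>u\<close> and \<open>T u\<close>,
  and (w3') forces \<open>u = T u\<close>.\<close>

lemma R_preserving_funpow:
  assumes "T_closed R T" and "(x0, T x0) \<in> R"
  shows "R_preserving R (\<lambda>n. (T ^^ n) x0)"
proof -
  have "((T ^^ n) x0, (T ^^ Suc n) x0) \<in> R" for n
  proof (induction n)
    case 0
    then show ?case using assms(2) by simp
  next
    case (Suc n)
    then show ?case using assms(1) unfolding T_closed_def by simp
  qed
  then show ?thesis unfolding R_preserving_def by blast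
qed

lemma funpow_contraction_step:
  fixes p :: "'a \<Rightarrow> 'a \<Rightarrow> real"
  assumes "T_closed R T" and "(x0, T x0) \<in> R" and "0 \<le> lam"
    and contr: "\<And>x y. (x, y) \<in> R \<Longrightarrow> p (T x) (T y) \<le> lam * p x y"
  shows "p ((T ^^ n) x0) ((T ^^ Suc n) x0) \<le> p x0 (T x0) * lam ^ n"
proof (induction n)
  case 0
  show ?case by simp
next
  case (Suc n)
  have "((T ^^ n) x0, (T ^^ Suc n) x0) \<in> R"
    using R_preserving_funpow[OF assms(1,2)] unfolding R_preserving_def by blast
  then have "p ((T ^^ Suc n) x0) ((T ^^ Suc (Suc n)) x0) \<le> lam * p ((T ^^ n) x0) ((T ^^ Suc n) x0)"
    using contr by simp
  also have "\<dots> \<le> lam * (p x0 (T x0) * lam ^ n)"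
    using Suc \<open>0 \<le> lam\<close> by (rule mult_left_mono)
  finally show ?case by (simp add: algebra_simps)
qed

lemma geometric_chain_bound:
  fixes p :: "'a \<Rightarrow> 'a \<Rightarrow> real" and lam c :: real
  assumes tri: "\<And>x y z. p x z \<le> p x y + p y z"
    and lam: "0 \<le> lam" "lam < 1" and "0 \<le> c"
    and step: "\<And>n. p (x n) (x (Suc n)) \<le> c * lam ^ n"
    and "n < m"
  shows "p (x n) (x m) \<le> c * lam ^ n / (1 - lam)"
proof -
  have "p (x n) (x m) \<le> c * (lam ^ n - lam ^ m) / (1 - lam)"
    using \<open>n < m\<close>
  proof (induction m)
    case 0
    then show ?case by simp
  next
    case (Suc m)
    show ?case
    proof (cases "n = m")
      case True
      have "c * lam ^ n = c * (lam ^ n - lam ^ Suc n) / (1 - lam)"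
        using lam by (simp add: field_simps)
      then show ?thesis using step[of n] True by simp
    next
      case False
      then have "n < m" using Suc.prems by simp
      have "p (x n) (x (Suc m)) \<le> p (x n) (x m) + p (x m) (x (Suc m))" by (rule tri)
      also have "\<dots> \<le> c * (lam ^ n - lam ^ m) / (1 - lam) + c * lam ^ m"
        using Suc.IH[OF \<open>n < m\<close>] step[of m] by simp
      also have "\<dots> = c * (lam ^ n - lam ^ Suc m) / (1 - lam)"
        using lam by (simp add: field_simps)
      finally show ?thesis .
    qed
  qed
  also have "\<dots> \<le> c * lam ^ n / (1 - lam)"
    using lam \<open>0 \<le> c\<close> by (intro divide_right_mono mult_left_mono) auto
  finally show ?thesis .
qed

lemma funpow_contraction_tail:
  assumes "w_distance_wrt R p" and "T_closed R T" and "(x0, T x0) \<in> R"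
    and lam: "0 \<le> lam" "lam < 1"
    and contr: "\<And>x y. (x, y) \<in> R \<Longrightarrow> p (T x) (T y) \<le> lam * p x y"
  obtains b where "b \<longlonglongrightarrow> 0" and "\<And>n m. n < m \<Longrightarrow> p ((T ^^ n) x0) ((T ^^ m) x0) \<le> b n"
proof
  show "(\<lambda>n. p x0 (T x0) * lam ^ n / (1 - lam)) \<longlonglongrightarrow> 0"
    using lam by (intro tendsto_divide_zero tendsto_mult_right_zero LIMSEQ_power_zero) simp
  fix n m :: nat
  assume "n < m"
  show "p ((T ^^ n) x0) ((T ^^ m) x0) \<le> p x0 (T x0) * lam ^ n / (1 - lam)"
  proof (rule geometric_chain_bound[where x="\<lambda>n. (T ^^ n) x0", OF _ lam _ _ \<open>n < m\<close>])
    show "p x z \<le> p x y + p y z" for x y z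
      using assms(1) unfolding w_distance_wrt_def by blast
    show "0 \<le> p x0 (T x0)"
      using assms(1) unfolding w_distance_wrt_def by blast
    show "p ((T ^^ k) x0) ((T ^^ Suc k) x0) \<le> p x0 (T x0) * lam ^ k" for k
      by (rule funpow_contraction_step[where p=p, OF assms(2,3) lam(1) contr])
  qed
qed

lemma w_distance_Cauchy:
  assumes "w_distance_wrt R p"
    and bound: "\<And>n m. n < m \<Longrightarrow> p (x n) (x m) \<le> b n" and "b \<longlonglongrightarrow> 0"
  shows "Cauchy x"
  unfolding Cauchy_def
proof (intro allI impI)
  fix e :: real
  assume "e > 0"
  then obtain d where "d > 0" and d: "\<And>a a' z. p z a \<le> d \<Longrightarrow> p z a' \<le> d \<Longrightarrow> dist a a' \<le> e / 2"
    using assms(1) unfolding w_distance_wrt_def by (meson half_gt_zero)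
  from order_tendstoD(2)[OF \<open>b \<longlonglongrightarrow> 0\<close> \<open>d > 0\<close>] obtain N where "b N < d"
    unfolding eventually_sequentially by blast
  have "dist (x m) (x n) < e" if "m \<ge> Suc N" "n \<ge> Suc N" for m n
  proof -
    have "p (x N) (x m) \<le> d" "p (x N) (x n) \<le> d"
      using bound[of N m] bound[of N n] \<open>b N < d\<close> that by auto
    then have "dist (x m) (x n) \<le> e / 2" by (rule d)
    then show ?thesis using \<open>e > 0\<close> by simp
  qed
  then show "\<exists>M. \<forall>m\<ge>M. \<forall>n\<ge>M. dist (x m) (x n) < e" by blast
qed

lemma R_lsc_at_le_limit:
  assumes "R_lsc_at R g u" and "R_preserving R y" and "y \<longlonglongrightarrow> u"
    and "eventually (\<lambda>m. g (y m) \<le> b) sequentially"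
  shows "g u \<le> b"
proof -
  have "g u \<le> liminf (\<lambda>m. g (y m))"
    using assms(1-3) unfolding R_lsc_at_def by blast
  also have "\<dots> \<le> limsup (\<lambda>m. g (y m))"
    by (rule Liminf_le_Limsup) simp
  also have "\<dots> \<le> b"
    using assms(4) by (rule Limsup_bounded)
  finally show ?thesis .
qed

lemma w_distance_tendsto_limit:
  assumes "w_distance_wrt R p" and "R_preserving R y" and "y \<longlonglongrightarrow> u"
    and bound: "\<And>n m. n < m \<Longrightarrow> p (y n) (y m) \<le> b n" and "b \<longlonglongrightarrow> 0"
  shows "(\<lambda>n. p (y n) u) \<longlonglongrightarrow> 0"
proof (rule tendsto_sandwich[OF _ _ tendsto_const \<open>b \<longlonglongrightarrow> 0\<close>])
  have "p (y n) u \<le> b n" for n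
  proof -
    have "R_lsc_at R (\<lambda>z. ereal (p (y n) z)) u"
      using assms(1) unfolding w_distance_wrt_def by blast
    moreover have "eventually (\<lambda>m. ereal (p (y n) (y m)) \<le> ereal (b n)) sequentially"
      unfolding eventually_sequentially using bound by (intro exI[of _ "Suc n"]) simp
    ultimately have "ereal (p (y n) u) \<le> ereal (b n)"
      by (rule R_lsc_at_le_limit[OF _ assms(2,3)])
    then show ?thesis by simp
  qed
  then show "eventually (\<lambda>n. p (y n) u \<le> b n) sequentially"
    by (simp add: always_eventually)
  show "eventually (\<lambda>n. 0 \<le> p (y n) u) sequentially"
    using assms(1) unfolding w_distance_wrt_def by (simp add: always_eventually)
qed

lemma w_distance_eqI:
  assumes "w_distance_wrt R p"
    and close: "\<And>d. d > 0 \<Longrightarrow> \<exists>z. p z a \<le> d \<and> p z b \<le> d"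
  shows "a = b"
proof -
  have "dist a b \<le> 0 + e" if "e > 0" for e
  proof -
    obtain d where "d > 0" and d: "\<forall>x y z. p z x \<le> d \<and> p z y \<le> d \<longrightarrow> dist x y \<le> e"
      using assms(1) \<open>e > 0\<close> unfolding w_distance_wrt_def by blast
    obtain z where "p z a \<le> d" "p z b \<le> d" using close[OF \<open>d > 0\<close>] by blast
    then have "dist a b \<le> e" using d by blast
    then show ?thesis by simp
  qed
  then have "dist a b \<le> 0" by (rule field_le_epsilon)
  then show ?thesis by simp
qed

lemma R_continuous_limit_fixed_point:
  assumes "R_continuous R T" and "R_preserving R s" and orbit: "\<And>n. s (Suc n) = T (s n)"
    and "s \<longlonglongrightarrow> u"
  shows "T u = u"
proof -
  have "(\<lambda>n. s (Suc n)) \<longlonglongrightarrow> T u"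
    using assms unfolding R_continuous_def orbit by blast
  then show ?thesis using LIMSEQ_Suc[OF \<open>s \<longlonglongrightarrow> u\<close>] LIMSEQ_unique by blast
qed

lemma d_self_closed_limit_fixed_point:
  assumes "w_distance_wrt R p" and "0 \<le> lam" "lam \<le> 1"
    and contr: "\<And>x y. (x, y) \<in> R \<Longrightarrow> p (T x) (T y) \<le> lam * p x y"
    and "d_self_closed_on R Y" and "\<And>n. s n \<in> Y" and "R_preserving R s"
    and orbit: "\<And>n. s (Suc n) = T (s n)"
    and "s \<longlonglongrightarrow> u" and lim: "(\<lambda>n. p (s n) u) \<longlonglongrightarrow> 0"
  shows "T u = u"
proof (rule sym, rule w_distance_eqI[OF assms(1)])
  have "R_preserving (restrict_rel R Y) s"
    using assms(6,7) unfolding R_preserving_def restrict_rel_def by blast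
  then obtain r :: "nat \<Rightarrow> nat" where r: "strict_mono r" "\<And>k. (s (r k), u) \<in> restrict_rel R Y"
    using assms(5,6,9) d_self_closed_on_def[THEN iffD1, rule_format, of R Y s u] by blast
  fix d :: real
  assume "d > 0"
  have "(\<lambda>k. p (s (r k)) u) \<longlonglongrightarrow> 0"
    using LIMSEQ_subseq_LIMSEQ[OF lim r(1)] by (simp add: o_def)
  moreover have "(\<lambda>k. p (s (Suc (r k))) u) \<longlonglongrightarrow> 0"
    using LIMSEQ_subseq_LIMSEQ[OF LIMSEQ_Suc[OF lim] r(1)] by (simp add: o_def)
  ultimately have "eventually (\<lambda>k. p (s (r k)) u < d \<and> p (s (Suc (r k))) u < d) sequentially"
    using \<open>d > 0\<close> by (intro eventually_conj order_tendstoD(2))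
  then obtain k where k1: "p (s (r k)) u \<le> d" and k2: "p (s (Suc (r k))) u \<le> d"
    unfolding eventually_sequentially by (meson less_imp_le order.refl)
  have "(s (r k), u) \<in> R" using r(2) unfolding restrict_rel_def by blast
  then have "p (T (s (r k))) (T u) \<le> lam * p (s (r k)) u" by (rule contr)
  also have "\<dots> \<le> p (s (r k)) u"
    using assms(1-3) unfolding w_distance_wrt_def by (simp add: mult_left_le_one_le)
  finally have "p (T (s (r k))) (T u) \<le> d" using k1 by simp
  moreover have "p (T (s (r k))) u \<le> d" using k2 orbit by simp
  ultimately show "\<exists>z. p z u \<le> d \<and> p z (T u) \<le> d" by blast
qed

theorem theorem2p1:
  fixes R :: "('a::metric_space \<times> 'a) set"
    and p :: "'a \<Rightarrow> 'a \<Rightarrow> real"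
    and T :: "'a \<Rightarrow> 'a"
  assumes "w_distance_wrt R p"
    and "\<exists>Y. range T \<subseteq> Y \<and> R_complete R Y \<and>
           (R_continuous R T \<or> d_self_closed_on R Y)"
    and "X_TR T R \<noteq> {}"
    and "T_closed R T"
    and "\<exists>lam. 0 \<le> lam \<and> lam < 1 \<and> (\<forall>x y. (x, y) \<in> R \<longrightarrow> p (T x) (T y) \<le> lam * p x y)"
  shows "{x. T x = x} \<noteq> {}"
proof -
  obtain Y where Y: "range T \<subseteq> Y" "R_complete R Y" "R_continuous R T \<or> d_self_closed_on R Y"
    using assms(2) by blast
  obtain lam where lam: "0 \<le> lam" "lam < 1"
    and contr: "\<And>x y. (x, y) \<in> R \<Longrightarrow> p (T x) (T y) \<le> lam * p x y"
    using assms(5) by blast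
  obtain x0 where "(x0, T x0) \<in> R" using assms(3) unfolding X_TR_def by blast
  then have x1: "(T x0, T (T x0)) \<in> R" using assms(4) unfolding T_closed_def by blast
  \<comment> \<open>The orbit is started at \<open>T x0\<close> so that it lies in \<open>Y\<close>.\<close>
  define y where "y n = (T ^^ n) (T x0)" for n
  have yY: "y n \<in> Y" for n
    using Y(1) unfolding y_def funpow_swap1[symmetric] by blast
  have orbit: "y (Suc n) = T (y n)" for n
    by (simp add: y_def)
  have yR: "R_preserving R y"
    unfolding y_def by (rule R_preserving_funpow[OF assms(4) x1])
  obtain b where "b \<longlonglongrightarrow> 0" and bound: "\<And>n m. n < m \<Longrightarrow> p (y n) (y m) \<le> b n"
    unfolding y_def using funpow_contraction_tail[where p=p, OF assms(1,4) x1 lam contr] by blast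
  obtain u where u: "y \<longlonglongrightarrow> u"
    using Y(2) yY yR w_distance_Cauchy[OF assms(1) bound \<open>b \<longlonglongrightarrow> 0\<close>]
    unfolding R_complete_def by blast
  have "T u = u"
    using Y(3) R_continuous_limit_fixed_point[OF _ yR orbit u]
      d_self_closed_limit_fixed_point[OF assms(1) lam(1) less_imp_le[OF lam(2)] contr _ yY yR orbit u
        w_distance_tendsto_limit[OF assms(1) yR u bound \<open>b \<longlonglongrightarrow> 0\<close>]]
    by blast
  then show ?thesis by blast
qed

end
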